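(* Let $\alpha\ge 1$. (i) The vector $(1,2,\dots,2)$ of length $\alpha$ is realized by the path $P_{2\alpha-1}$ on $2\alpha-1$ vertices, and (up to isomorphism) by no other graph. (ii) No vector of the form $(1,2,\dots,2,1)$ (with at least one entry 2) is realizable. (iii) The vector $(2,\dots,2)$ of length $\alpha$ is 0-realized by the path $P_{2\alpha}$ on $2\alpha$ vertices, and (up to isomorphism) by no other graph. (iv) No vector of the form $(2,\dots,2,1)$ (with at least one entry 2) is 0-realizable.
   Context: All graphs are finite, nonempty, and reflexive (every vertex has a loop). $N[v]$ is the closed neighborhood of $v$ (including $v$). For distinct $v,w$, $w$ strictly corners $v$ if $N[v]\subsetneq N[w]$; $v$ is then a strict corner. A vertex dominates a set if adjacent to all its vertices. Corner ranking: set $G^{(1)}=G$, $k=1$. If $G^{(k)}$ is a clique, give all its vertices rank $k$ and stop. Else if $G^{(k)}$ has no strict corners, give all its vertices rank $\infty$ and stop. Else give every strict corner of $G^{(k)}$ rank $k$, delete them to get $G^{(k+1)}$ (induced subgraph), increase $k$ and repeat. The corner rank of $G$ is the largest rank of a vertex; $X_k$ is the set of rank-$k$ vertices. A graph is cop-win (in the game of cops and robbers) iff its corner rank is finite. If $G$ has finite corner rank $\alpha\ge 2$, it is of type 1 if some (equivalently every) vertex of rank $\alpha$ dominates $V(G^{(\alpha-1)})$, and of type 0 otherwise. A vector is a finite list of positive integers. The rank cardinality vector of a graph of corner rank $\alpha$ is $(x_\alpha,\dots,x_1)$ with $x_k=|X_k|$. A vector is realizable if it is the rank cardinality vector of some cop-win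 graph, and 0-realizable if it is the rank cardinality vector of some cop-win graph of type 0. *)

theory Defs
  imports Main
begin

text \<open>A (finite, nonempty, reflexive) graph is given by a vertex set V and a
symmetric adjacency relation E (only its restriction to V matters).\<close>

definition graph :: "'a set \<Rightarrow> ('a \<Rightarrow> 'a \<Rightarrow> bool) \<Rightarrow> bool" where
  "graph V E \<longleftrightarrow> finite V \<and> V \<noteq> {} \<and> (\<forall>v\<in>V. E v v) \<and>
     (\<forall>u\<in>V. \<forall>v\<in>V. E u v \<longleftrightarrow> E v u)"

definition cnbhd :: "('a \<Rightarrow> 'a \<Rightarrow> bool) \<Rightarrow> 'a set \<Rightarrow> 'a \<Rightarrow> 'a set" where
  "cnbhd E S v = {w \<in> S. E v w}"

definition is_clique :: "('a \<Rightarrow> 'a \<Rightarrow> bool) \<Rightarrow> 'a set \<Rightarrow> bool" where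
  "is_clique E S \<longleftrightarrow> (\<forall>u\<in>S. \<forall>v\<in>S. E u v)"

definition strict_corners :: "('a \<Rightarrow> 'a \<Rightarrow> bool) \<Rightarrow> 'a set \<Rightarrow> 'a set" where
  "strict_corners E S = {v \<in> S. \<exists>w\<in>S. w \<noteq> v \<and> cnbhd E S v \<subset> cnbhd E S w}"

text \<open>Vertex set of G^(k), for k \<ge> 1 (index 0 is a dummy equal to V).\<close>
fun layer :: "('a \<Rightarrow> 'a \<Rightarrow> bool) \<Rightarrow> 'a set \<Rightarrow> nat \<Rightarrow> 'a set" where
  "layer E V 0 = V"
| "layer E V (Suc 0) = V"
| "layer E V (Suc (Suc k)) = layer E V (Suc k) - strict_corners E (layer E V (Suc k))"

text \<open>Finite corner rank (equivalently cop-win): some G^(k) is a clique.\<close>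
definition cop_win :: "'a set \<Rightarrow> ('a \<Rightarrow> 'a \<Rightarrow> bool) \<Rightarrow> bool" where
  "cop_win V E \<longleftrightarrow> (\<exists>k\<ge>1. is_clique E (layer E V k))"

definition corner_rank :: "'a set \<Rightarrow> ('a \<Rightarrow> 'a \<Rightarrow> bool) \<Rightarrow> nat" where
  "corner_rank V E = (LEAST k. k \<ge> 1 \<and> is_clique E (layer E V k))"

text \<open>X_k: the set of vertices of rank k (k \<ge> 1).\<close>
definition rank_set :: "'a set \<Rightarrow> ('a \<Rightarrow> 'a \<Rightarrow> bool) \<Rightarrow> nat \<Rightarrow> 'a set" where
  "rank_set V E k =
     (if k \<ge> 1 \<and> (\<forall>j\<in>{1..<k}. \<not> is_clique E (layer E V j)) then
        (if is_clique E (layer E V k) then layer E V k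
         else strict_corners E (layer E V k))
      else {})"

text \<open>Rank cardinality vector (x_alpha, ..., x_1).\<close>
definition rcv :: "'a set \<Rightarrow> ('a \<Rightarrow> 'a \<Rightarrow> bool) \<Rightarrow> nat list" where
  "rcv V E = map (\<lambda>k. card (rank_set V E k)) (rev [1..<corner_rank V E + 1])"

definition dominates :: "('a \<Rightarrow> 'a \<Rightarrow> bool) \<Rightarrow> 'a \<Rightarrow> 'a set \<Rightarrow> bool" where
  "dominates E v S \<longleftrightarrow> (\<forall>w\<in>S. E v w)"

text \<open>Type 1: corner rank alpha \<ge> 2 and some rank-alpha vertex dominates G^(alpha-1).
Type 0: cop-win and not type 1 (cliques, of corner rank 1, count as type 0).\<close>
definition type1 :: "'a set \<Rightarrow> ('a \<Rightarrow> 'a \<Rightarrow> bool) \<Rightarrow> bool" where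
  "type1 V E \<longleftrightarrow> cop_win V E \<and> corner_rank V E \<ge> 2 \<and>
     (\<exists>v\<in>rank_set V E (corner_rank V E).
        dominates E v (layer E V (corner_rank V E - 1)))"

definition type0 :: "'a set \<Rightarrow> ('a \<Rightarrow> 'a \<Rightarrow> bool) \<Rightarrow> bool" where
  "type0 V E \<longleftrightarrow> cop_win V E \<and> \<not> type1 V E"

definition realizable :: "nat list \<Rightarrow> bool" where
  "realizable xs \<longleftrightarrow> (\<exists>(V::nat set) E. graph V E \<and> cop_win V E \<and> rcv V E = xs)"

definition zero_realizable :: "nat list \<Rightarrow> bool" where
  "zero_realizable xs \<longleftrightarrow> (\<exists>(V::nat set) E. graph V E \<and> type0 V E \<and> rcv V E = xs)"

definition path_V :: "nat \<Rightarrow> nat set" where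
  "path_V n = {0..<n}"

definition path_E :: "nat \<Rightarrow> nat \<Rightarrow> bool" where
  "path_E i j \<longleftrightarrow> i \<le> j + 1 \<and> j \<le> i + 1"

definition graph_iso :: "'a set \<Rightarrow> ('a \<Rightarrow> 'a \<Rightarrow> bool) \<Rightarrow> 'b set \<Rightarrow> ('b \<Rightarrow> 'b \<Rightarrow> bool) \<Rightarrow> bool" where
  "graph_iso V E W F \<longleftrightarrow> (\<exists>f. bij_betw f V W \<and> (\<forall>u\<in>V. \<forall>v\<in>V. E u v \<longleftrightarrow> F (f u) (f v)))"

end

theory Submission
  imports Defs
begin

(* Removing the strict corners of a cop-win graph G leaves G^(2), and the rank cardinality
   vector of G is that of G^(2) followed by the number of removed corners. By induction all
   four statements therefore reduce to one extension step. Suppose the non-corners of G induce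
   a path p_0, ..., p_(n-1) with n >= 3. Every strict corner z is strictly dominated by a
   non-corner (take a dominating vertex whose closed neighbourhood is maximal). As p_0 is not a
   corner although N[p_0] is contained in N[p_1] inside the path, some vertex z is adjacent to
   p_0 but not to p_1; such a z is a corner, and its non-corner dominator must be p_0, so p_0
   is the only non-corner neighbour of z. The same happens at p_(n-1), and the two corners
   obtained are distinct and non-adjacent. Hence G has at least two strict corners, and if it
   has exactly two, G is the path with one pendant vertex attached at each end. For n = 1 the
   two corners come from G not being a clique, for n = 2 from G being of type 0. *)

lemma strict_corners_subset: "strict_corners E S \<subseteq> S"
  unfolding strict_corners_def by auto

lemma strict_corner_below_non_corner:
  assumes "finite S" and "z \<in> strict_corners E S"
  shows "\<exists>w \<in> S - strict_corners E S. cnbhd E S z \<subset> cnbhd E S w"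
proof -
  obtain w0 where "w0 \<in> S" and z_w0: "cnbhd E S z \<subset> cnbhd E S w0"
    using assms(2) unfolding strict_corners_def by auto
  then obtain w where w: "w \<in> S" "cnbhd E S w0 \<subseteq> cnbhd E S w"
    and maximal: "\<forall>u \<in> S. cnbhd E S w \<subseteq> cnbhd E S u \<longrightarrow> cnbhd E S w = cnbhd E S u"
    using finite_has_maximal2[of "cnbhd E S ` S" "cnbhd E S w0"] assms(1) by auto
  have "w \<notin> strict_corners E S"
    using maximal unfolding strict_corners_def by auto
  with w z_w0 show ?thesis by blast
qed

lemma non_corner_exists:
  assumes "finite S" and "S \<noteq> {}"
  shows "S - strict_corners E S \<noteq> {}"
  using strict_corner_below_non_corner[OF assms(1)] assms(2) by blast

section \<open>Removing the strict corners\<close>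

lemma layer_remove_corners:
  assumes "j \<ge> 1"
  shows "layer E (V - strict_corners E V) j = layer E V (Suc j)"
proof -
  have shifted: "layer E (V - strict_corners E V) (Suc k) = layer E V (Suc (Suc k))" for k
    by (induction k) auto
  then show ?thesis
    using assms shifted[of "j - 1"] by simp
qed

lemma corner_rank_least:
  assumes "cop_win V E"
  shows "corner_rank V E \<ge> 1" and "is_clique E (layer E V (corner_rank V E))"
    and "\<And>j. 1 \<le> j \<Longrightarrow> j < corner_rank V E \<Longrightarrow> \<not> is_clique E (layer E V j)"
proof -
  obtain k where "k \<ge> 1" "is_clique E (layer E V k)"
    using assms unfolding cop_win_def by auto
  then have "corner_rank V E \<ge> 1 \<and> is_clique E (layer E V (corner_rank V E))"
    unfolding corner_rank_def by (rule LeastI[of _ k, OF conjI])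
  then show "corner_rank V E \<ge> 1" "is_clique E (layer E V (corner_rank V E))" by auto
  show "\<not> is_clique E (layer E V j)" if "1 \<le> j" "j < corner_rank V E" for j
    using that not_less_Least unfolding corner_rank_def by blast
qed

lemma corner_rank_eqI:
  assumes "\<alpha> \<ge> 1" and "is_clique E (layer E V \<alpha>)"
    and "\<And>j. 1 \<le> j \<Longrightarrow> j < \<alpha> \<Longrightarrow> \<not> is_clique E (layer E V j)"
  shows "corner_rank V E = \<alpha>"
  unfolding corner_rank_def
  by (rule Least_equality) (use assms in \<open>auto simp: not_le[symmetric]\<close>)

lemma length_rcv: "length (rcv V E) = corner_rank V E"
  unfolding rcv_def by simp

lemma rank_set_corner_rank:
  assumes "cop_win V E"
  shows "rank_set V E (corner_rank V E) = layer E V (corner_rank V E)"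
  using corner_rank_least[OF assms] unfolding rank_set_def by auto

lemma rcv_clique:
  assumes "is_clique E V"
  shows "rcv V E = [card V]"
proof -
  have "corner_rank V E = 1"
    by (rule corner_rank_eqI) (use assms in auto)
  then show ?thesis
    using assms unfolding rcv_def rank_set_def by simp
qed

lemma graph_remove_corners:
  assumes "graph V E"
  shows "graph (V - strict_corners E V) E"
  using assms non_corner_exists[of V E] unfolding graph_def by auto

lemma clique_iff_corner_rank_1:
  assumes "cop_win V E"
  shows "is_clique E V \<longleftrightarrow> corner_rank V E = 1"
  using corner_rank_least[OF assms] corner_rank_eqI[of 1 E V] by auto

lemma rank_set_remove_corners:
  assumes "\<not> is_clique E V" and "k \<ge> 1"
  shows "rank_set (V - strict_corners E V) E k = rank_set V E (Suc k)"
proof -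
  have "{1..<Suc k} = insert 1 (Suc ` {1..<k})"
    using assms(2) by (auto simp: image_iff intro: bexI[of _ "_ - 1"])
  then have "(\<forall>j\<in>{1..<Suc k}. \<not> is_clique E (layer E V j)) \<longleftrightarrow>
        (\<forall>j\<in>{1..<k}. \<not> is_clique E (layer E V (Suc j)))"
    using assms(1) by (simp del: image_Suc_atLeastLessThan)
  then show ?thesis
    unfolding rank_set_def using assms(2) layer_remove_corners[of _ E V] by simp
qed

lemma cop_win_remove_corners:
  assumes "cop_win V E" and "\<not> is_clique E V"
  shows "cop_win (V - strict_corners E V) E"
    and "corner_rank (V - strict_corners E V) E = corner_rank V E - 1"
proof -
  note least = corner_rank_least[OF assms(1)]
  have "corner_rank V E \<noteq> 1"
    using least(2) assms(2) by auto
  then have ge2: "corner_rank V E - 1 \<ge> 1"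
    using least(1) by simp
  have clique: "is_clique E (layer E (V - strict_corners E V) (corner_rank V E - 1))"
    using least(2) layer_remove_corners[OF ge2, of E V] ge2 by simp
  then show "cop_win (V - strict_corners E V) E"
    unfolding cop_win_def using ge2 by blast
  show "corner_rank (V - strict_corners E V) E = corner_rank V E - 1"
    by (rule corner_rank_eqI[OF ge2 clique]) (use least(3) layer_remove_corners[of _ E V] in auto)
qed

lemma rcv_remove_corners:
  assumes "cop_win V E" and "\<not> is_clique E V"
  shows "rcv V E = rcv (V - strict_corners E V) E @ [card (strict_corners E V)]"
proof -
  define \<beta> where "\<beta> = corner_rank (V - strict_corners E V) E"
  have rank: "corner_rank V E = Suc \<beta>" "\<beta> \<ge> 1"
    using cop_win_remove_corners[OF assms] corner_rank_least(1) unfolding \<beta>_def by force+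
  have "[1..<Suc \<beta> + 1] = 1 # map Suc [1..<\<beta> + 1]"
    by (simp add: map_Suc_upt upt_conv_Cons)
  then have indices: "rev [1..<Suc \<beta> + 1] = map Suc (rev [1..<\<beta> + 1]) @ [1]"
    by (simp add: rev_map)
  have "map (\<lambda>k. card (rank_set V E (Suc k))) (rev [1..<\<beta> + 1]) = rcv (V - strict_corners E V) E"
    unfolding rcv_def \<beta>_def[symmetric]
    by (rule map_cong) (auto simp: rank_set_remove_corners[OF assms(2)])
  moreover have "rank_set V E 1 = strict_corners E V"
    using assms(2) unfolding rank_set_def by simp
  ultimately show ?thesis
    unfolding rcv_def[of V E] rank indices by (simp add: comp_def)
qed

lemma type0_remove_corners:
  assumes "type0 V E" and "\<not> is_clique E V"
  shows "type0 (V - strict_corners E V) E"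
proof -
  define L where "L = V - strict_corners E V"
  have cop_win: "cop_win V E"
    using assms(1) unfolding type0_def by simp
  note L_rank = cop_win_remove_corners[OF cop_win assms(2), folded L_def]
  have "type1 V E" if "type1 L E"
  proof -
    from that obtain v where ge2: "corner_rank L E \<ge> 2"
      and v: "v \<in> rank_set L E (corner_rank L E)"
      and dom: "dominates E v (layer E L (corner_rank L E - 1))"
      unfolding type1_def by auto
    obtain m where m: "corner_rank L E = Suc (Suc m)"
      using ge2 by (metis add_2_eq_Suc le_Suc_ex)
    have "layer E L (corner_rank L E - 1) = layer E V (corner_rank V E - 1)"
      using layer_remove_corners[of "Suc m" E V] m L_rank(2) unfolding L_def by simp
    moreover have "rank_set L E (corner_rank L E) = rank_set V E (corner_rank V E)"
      using rank_set_remove_corners[OF assms(2), of "corner_rank L E"] ge2 L_rank(2)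
      unfolding L_def by simp
    ultimately show "type1 V E"
      unfolding type1_def using cop_win ge2 L_rank(2) v dom by auto
  qed
  then show ?thesis
    using assms(1) L_rank(1) unfolding type0_def L_def by blast
qed

lemma type0_rank2_not_dominating:
  assumes "type0 V E" and "corner_rank V E = 2" and "v \<in> V - strict_corners E V"
  shows "\<not> dominates E v V"
  using assms rank_set_corner_rank[of V E] unfolding type0_def type1_def
  by (auto simp: numeral_2_eq_2)

section \<open>Induced paths\<close>

definition induced_path :: "('a \<Rightarrow> 'a \<Rightarrow> bool) \<Rightarrow> (nat \<Rightarrow> 'a) \<Rightarrow> nat \<Rightarrow> 'a set \<Rightarrow> bool" where
  "induced_path E p n H \<longleftrightarrow>
     bij_betw p {0..<n} H \<and> (\<forall>i<n. \<forall>j<n. E (p i) (p j) \<longleftrightarrow> path_E i j)"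

lemma induced_path_in: "induced_path E p n H \<Longrightarrow> i < n \<Longrightarrow> p i \<in> H"
  unfolding induced_path_def bij_betw_def by auto

lemma induced_path_eq_iff:
  "induced_path E p n H \<Longrightarrow> i < n \<Longrightarrow> j < n \<Longrightarrow> p i = p j \<longleftrightarrow> i = j"
  unfolding induced_path_def bij_betw_def inj_on_def by auto

lemma induced_path_adj_iff:
  "induced_path E p n H \<Longrightarrow> i < n \<Longrightarrow> j < n \<Longrightarrow> E (p i) (p j) \<longleftrightarrow> path_E i j"
  unfolding induced_path_def by auto

lemma induced_path_surj: "induced_path E p n H \<Longrightarrow> v \<in> H \<Longrightarrow> \<exists>i<n. v = p i"
  unfolding induced_path_def bij_betw_def by auto

lemma induced_path_graph_iso:
  assumes "induced_path E p n H"
  shows "graph_iso H E (path_V n) path_E"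
proof -
  have bij: "bij_betw p {0..<n} H" and adj: "\<forall>i<n. \<forall>j<n. E (p i) (p j) \<longleftrightarrow> path_E i j"
    using assms unfolding induced_path_def by auto
  have "bij_betw (inv_into {0..<n} p) H (path_V n)"
    unfolding path_V_def by (rule bij_betw_inv_into[OF bij])
  moreover have "E u v \<longleftrightarrow> path_E (inv_into {0..<n} p u) (inv_into {0..<n} p v)"
    if "u \<in> H" "v \<in> H" for u v
    using that adj bij bij_betw_inv_into_right[OF bij] bij_betw_apply[OF bij_betw_inv_into[OF bij]]
    by (metis atLeastLessThan_iff)
  ultimately show ?thesis
    unfolding graph_iso_def by blast
qed

lemma induced_path_rev:
  assumes "induced_path E p n H"
  shows "induced_path E (\<lambda>i. p (n - 1 - i)) n H"
proof -
  have "bij_betw (\<lambda>i. n - 1 - i) {0..<n} {0..<n}"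
    by (rule bij_betw_byWitness[where f' = "\<lambda>i. n - 1 - i"]) auto
  then have "bij_betw (p \<circ> (\<lambda>i. n - 1 - i)) {0..<n} H"
    using assms unfolding induced_path_def by (blast intro: bij_betw_trans)
  moreover have "path_E (n - 1 - i) (n - 1 - j) \<longleftrightarrow> path_E i j" if "i < n" "j < n" for i j
    using that unfolding path_E_def by auto
  ultimately show ?thesis
    using induced_path_adj_iff[OF assms] unfolding induced_path_def comp_def by auto
qed

lemma induced_path_snoc:
  assumes path: "induced_path E p n H" and "n \<ge> 1"
    and graph: "graph V E" and "insert z H \<subseteq> V" and "z \<notin> H"
    and z_adj: "\<forall>v\<in>H. E z v \<longleftrightarrow> v = p (n - 1)"
  shows "induced_path E (p(n := z)) (Suc n) (insert z H)"
proof -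
  have "bij_betw p {0..<n} H"
    using path unfolding induced_path_def by simp
  then have "bij_betw (p(n := z)) {0..<n} H"
    by (rule bij_betw_cong[THEN iffD1, rotated]) simp
  then have bij: "bij_betw (p(n := z)) {0..<Suc n} (insert z H)"
    using notIn_Un_bij_betw3[of n "{0..<n}" "p(n := z)" H] \<open>z \<notin> H\<close> by (simp add: atLeast0_lessThan_Suc)
  have sym: "E u v \<longleftrightarrow> E v u" if "u \<in> insert z H" "v \<in> insert z H" for u v
    using graph that \<open>insert z H \<subseteq> V\<close> unfolding graph_def by blast
  have "E z z"
    using graph \<open>insert z H \<subseteq> V\<close> unfolding graph_def by blast
  have z_path: "E z (p j) \<longleftrightarrow> path_E n j" "E (p j) z \<longleftrightarrow> path_E j n" if "j < n" for j
  proof -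
    have "E z (p j) \<longleftrightarrow> j = n - 1"
      using z_adj induced_path_in[OF path, of j] induced_path_eq_iff[OF path, of j "n - 1"] that \<open>n \<ge> 1\<close> by auto
    then show "E z (p j) \<longleftrightarrow> path_E n j" "E (p j) z \<longleftrightarrow> path_E j n"
      using sym[of z "p j"] induced_path_in[OF path] that unfolding path_E_def by auto
  qed
  have "E ((p(n := z)) i) ((p(n := z)) j) \<longleftrightarrow> path_E i j" if "i < Suc n" "j < Suc n" for i j
    using that \<open>E z z\<close> z_path induced_path_adj_iff[OF path]
    unfolding path_E_def by (cases "i = n"; cases "j = n") auto
  with bij show ?thesis
    unfolding induced_path_def by blast
qed

lemma induced_path_extend_both_ends:
  assumes path: "induced_path E p n H" and "n \<ge> 1" and graph: "graph V E"
    and V: "V = insert z0 (insert z1 H)" and "z0 \<notin> H" "z1 \<notin> H" "z0 \<noteq> z1"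
    and z0: "cnbhd E V z0 = {z0, p 0}" and z1: "cnbhd E V z1 = {z1, p (n - 1)}"
  shows "\<exists>q. induced_path E q (n + 2) V"
proof -
  have "\<forall>v\<in>H. E z1 v \<longleftrightarrow> v = p (n - 1)"
    using z1 \<open>z1 \<notin> H\<close> unfolding V cnbhd_def set_eq_iff by auto
  then have "induced_path E (p(n := z1)) (Suc n) (insert z1 H)"
    using induced_path_snoc[OF path \<open>n \<ge> 1\<close> graph] V \<open>z1 \<notin> H\<close> by blast
  then have "induced_path E (\<lambda>i. (p(n := z1)) (n - i)) (Suc n) (insert z1 H)"
    using induced_path_rev by fastforce
  moreover have "\<forall>v\<in>insert z1 H. E z0 v \<longleftrightarrow> v = p 0"
    using z0 V \<open>z0 \<notin> H\<close> \<open>z0 \<noteq> z1\<close> unfolding cnbhd_def by auto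
  ultimately have "induced_path E ((\<lambda>i. (p(n := z1)) (n - i))(Suc n := z0)) (Suc (Suc n)) V"
    unfolding V using \<open>z0 \<notin> H\<close> \<open>z0 \<noteq> z1\<close> \<open>n \<ge> 1\<close>
    by (intro induced_path_snoc[OF _ _ graph]) (auto simp: V)
  then show ?thesis
    by auto
qed

section \<open>Extending a path of non-corners\<close>

locale corner_peeling =
  fixes V :: "'a set" and E :: "'a \<Rightarrow> 'a \<Rightarrow> bool" and p :: "nat \<Rightarrow> 'a" and n :: nat
  assumes graph: "graph V E"
    and core_path: "induced_path E p n (V - strict_corners E V)"
begin

lemma finite_V: "finite V"
  and reflexive: "v \<in> V \<Longrightarrow> E v v"
  and symmetric: "u \<in> V \<Longrightarrow> v \<in> V \<Longrightarrow> E u v \<longleftrightarrow> E v u"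
  using graph unfolding graph_def by auto

lemmas core_in = induced_path_in[OF core_path]
  and core_eq_iff = induced_path_eq_iff[OF core_path]
  and core_adj_iff = induced_path_adj_iff[OF core_path]
  and core_surj = induced_path_surj[OF core_path]

lemma core_in_V: "i < n \<Longrightarrow> p i \<in> V"
  using core_in by blast

lemma core_not_corner: "i < n \<Longrightarrow> p i \<notin> strict_corners E V"
  using core_in by blast

lemma reversed: "corner_peeling V E (\<lambda>i. p (n - 1 - i)) n"
  by unfold_locales (rule graph, rule induced_path_rev[OF core_path])

lemma corner_below_core:
  assumes "z \<in> strict_corners E V"
  obtains i where "i < n" and "cnbhd E V z \<subset> cnbhd E V (p i)"
  using strict_corner_below_non_corner[OF finite_V assms] core_surj by blast

lemma private_corner_at_start:
  assumes "n \<ge> 2" and "z \<in> V" and "E (p 0) z" and "\<not> E (p 1) z"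
  shows "z \<in> strict_corners E V" and "cnbhd E V z \<subseteq> cnbhd E V (p 0)"
    and "cnbhd E V z - strict_corners E V = {p 0}"
proof -
  have "z \<noteq> p i" if "i < n" for i
    using assms(3,4) core_adj_iff[of 0 i] core_adj_iff[of 1 i] that \<open>n \<ge> 2\<close> unfolding path_E_def by auto
  then show corner: "z \<in> strict_corners E V"
    using \<open>z \<in> V\<close> core_surj by blast
  obtain i where "i < n" and below: "cnbhd E V z \<subset> cnbhd E V (p i)"
    using corner_below_core[OF corner] .
  have "p 0 \<in> V"
    using core_in_V \<open>n \<ge> 2\<close> by simp
  then have "z \<in> cnbhd E V z" "p 0 \<in> cnbhd E V z"
    using assms(2,3) reflexive symmetric[of z "p 0"] unfolding cnbhd_def by auto
  then have "E (p i) (p 0)" "E (p i) z"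
    using below unfolding cnbhd_def by auto
  then have "i = 0"
    using assms(4) core_adj_iff[of i 0] \<open>i < n\<close> \<open>n \<ge> 2\<close> unfolding path_E_def by (cases i) auto
  with below show below0: "cnbhd E V z \<subseteq> cnbhd E V (p 0)"
    by blast
  have "E z v \<longleftrightarrow> v = p 0" if v: "v \<in> V - strict_corners E V" for v
  proof -
    obtain j where "j < n" "v = p j"
      using core_surj[OF v] by blast
    then show ?thesis
      using below0 assms(2-4) symmetric core_in_V core_adj_iff[of 0 j] \<open>n \<ge> 2\<close>
      unfolding cnbhd_def path_E_def by (cases j) auto
  qed
  then show "cnbhd E V z - strict_corners E V = {p 0}"
    using core_in_V core_not_corner \<open>n \<ge> 2\<close> unfolding cnbhd_def by auto
qed

lemma extend_by_pendant_corners: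
  assumes "n \<ge> 1" and corners: "z0 \<in> strict_corners E V" "z1 \<in> strict_corners E V"
    and "\<not> E z0 z1"
    and z0: "cnbhd E V z0 - strict_corners E V = {p 0}"
    and z1: "cnbhd E V z1 - strict_corners E V = {p (n - 1)}"
  shows "card (strict_corners E V) \<ge> 2"
    and "card (strict_corners E V) = 2 \<Longrightarrow> \<exists>q. induced_path E q (n + 2) V"
proof -
  have V: "z0 \<in> V" "z1 \<in> V"
    using corners strict_corners_subset[of E V] by blast+
  have "z0 \<noteq> z1"
    using \<open>\<not> E z0 z1\<close> reflexive V by blast
  have finite: "finite (strict_corners E V)"
    by (rule finite_subset[OF strict_corners_subset finite_V])
  have pair: "card {z0, z1} = 2"
    using \<open>z0 \<noteq> z1\<close> by simp
  then show "card (strict_corners E V) \<ge> 2"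
    using card_mono[OF finite] corners by (metis empty_subsetI insert_subset)
  assume "card (strict_corners E V) = 2"
  then have corners_eq: "strict_corners E V = {z0, z1}"
    using card_subset_eq[OF finite] pair corners by (metis empty_subsetI insert_subset)
  then have "V = insert z0 (insert z1 (V - strict_corners E V))"
    using V by blast
  moreover have "cnbhd E V z0 \<inter> strict_corners E V = {z0}"
    "cnbhd E V z1 \<inter> strict_corners E V = {z1}"
    using corners_eq reflexive V \<open>\<not> E z0 z1\<close> symmetric[OF V]
    unfolding cnbhd_def by auto
  then have "cnbhd E V z0 = {z0, p 0}" "cnbhd E V z1 = {z1, p (n - 1)}"
    using z0 z1 by blast+
  ultimately show "\<exists>q. induced_path E q (n + 2) V"
    using induced_path_extend_both_ends[OF core_path \<open>n \<ge> 1\<close> graph] \<open>z0 \<noteq> z1\<close> corners_eq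
    by blast
qed

lemma private_neighbour_of_non_corner_start:
  assumes "n \<ge> 3"
  shows "\<exists>z\<in>V. E (p 0) z \<and> \<not> E (p 1) z"
proof (rule ccontr)
  assume "\<not> ?thesis"
  then have "cnbhd E V (p 0) \<subseteq> cnbhd E V (p 1)"
    unfolding cnbhd_def by auto
  moreover have "p 2 \<in> cnbhd E V (p 1) - cnbhd E V (p 0)"
    using core_adj_iff[of 1 2] core_adj_iff[of 0 2] core_in_V \<open>n \<ge> 3\<close> unfolding cnbhd_def path_E_def by auto
  ultimately have "cnbhd E V (p 0) \<subset> cnbhd E V (p 1)"
    by blast
  moreover have "p 1 \<in> V" "p 1 \<noteq> p 0" "p 0 \<in> V"
    using core_in_V core_eq_iff[of 1 0] \<open>n \<ge> 3\<close> by auto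
  ultimately have "p 0 \<in> strict_corners E V"
    unfolding strict_corners_def by blast
  with core_not_corner \<open>n \<ge> 3\<close> show False
    by simp
qed

lemma private_neighbour_of_non_dominating_end:
  assumes "n = 2" and "\<not> dominates E (p 1) V"
  shows "\<exists>z\<in>V. E (p 0) z \<and> \<not> E (p 1) z"
proof -
  obtain z where z: "z \<in> V" "\<not> E (p 1) z"
    using assms(2) unfolding dominates_def by auto
  have "z \<noteq> p i" if "i < n" for i
    using z core_adj_iff[of 1 i] that \<open>n = 2\<close> unfolding path_E_def by auto
  then have corner: "z \<in> strict_corners E V"
    using z(1) core_surj by blast
  obtain i where "i < n" and "cnbhd E V z \<subset> cnbhd E V (p i)"
    using corner_below_core[OF corner] .
  then have "E (p i) z"
    using z(1) reflexive unfolding cnbhd_def by blast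
  moreover have "i = 0"
    using \<open>i < n\<close> \<open>n = 2\<close> calculation z(2) by (cases i) auto
  ultimately show ?thesis
    using z by blast
qed

lemma pendant_corners_of_single_vertex_core:
  assumes "n = 1" and "\<not> is_clique E V"
  obtains z0 z1 where "z0 \<in> strict_corners E V" "z1 \<in> strict_corners E V" "\<not> E z0 z1"
    "cnbhd E V z0 - strict_corners E V = {p 0}" "cnbhd E V z1 - strict_corners E V = {p 0}"
proof -
  have core_eq: "V - strict_corners E V = {p 0}"
    using core_path \<open>n = 1\<close> unfolding induced_path_def bij_betw_def by simp
  have p0_adj: "E (p 0) w" if "w \<in> V" for w
  proof (cases "w \<in> strict_corners E V")
    case True
    then obtain i where "i < n" and "cnbhd E V w \<subset> cnbhd E V (p i)"
      by (rule corner_below_core)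
    moreover have "w \<in> cnbhd E V w"
      using reflexive[OF that] that unfolding cnbhd_def by simp
    ultimately show ?thesis
      using \<open>n = 1\<close> unfolding cnbhd_def by auto
  next
    case False
    then have "w = p 0"
      using core_eq that by blast
    then show ?thesis
      using reflexive that by simp
  qed
  obtain z0 z1 where z: "z0 \<in> V" "z1 \<in> V" "\<not> E z0 z1"
    using assms(2) unfolding is_clique_def by auto
  then have "z0 \<noteq> p 0" "z1 \<noteq> p 0"
    using p0_adj symmetric by auto
  then have corners: "z0 \<in> strict_corners E V" "z1 \<in> strict_corners E V"
    using z core_eq by auto
  have "p 0 \<in> V"
    using core_eq by auto
  then have "cnbhd E V z0 - strict_corners E V = {p 0}" "cnbhd E V z1 - strict_corners E V = {p 0}"
    using core_eq p0_adj symmetric z(1,2) unfolding cnbhd_def by auto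
  with that corners z(3) show ?thesis
    by blast
qed

lemma pendant_corners_at_both_ends:
  assumes "n = 1 \<and> \<not> is_clique E V
    \<or> n = 2 \<and> \<not> dominates E (p 0) V \<and> \<not> dominates E (p 1) V \<or> n \<ge> 3"
  obtains z0 z1 where "z0 \<in> strict_corners E V" "z1 \<in> strict_corners E V" "\<not> E z0 z1"
    "cnbhd E V z0 - strict_corners E V = {p 0}" "cnbhd E V z1 - strict_corners E V = {p (n - 1)}"
proof (cases "n = 1")
  case True
  with assms pendant_corners_of_single_vertex_core that show ?thesis
    by auto
next
  case False
  with assms have "n \<ge> 2"
    by auto
  interpret rev: corner_peeling V E "\<lambda>i. p (n - 1 - i)" n
    by (rule reversed)
  have "\<exists>z\<in>V. E (p 0) z \<and> \<not> E (p 1) z"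
    using assms private_neighbour_of_non_corner_start private_neighbour_of_non_dominating_end False
    by auto
  then obtain z0 where "z0 \<in> V" "E (p 0) z0" "\<not> E (p 1) z0"
    by blast
  note z0 = private_corner_at_start[OF \<open>n \<ge> 2\<close> this]
  have "\<exists>z\<in>V. E (p (n - 1)) z \<and> \<not> E (p (n - 2)) z"
    using assms rev.private_neighbour_of_non_corner_start rev.private_neighbour_of_non_dominating_end False
    by (auto simp: numeral_2_eq_2)
  then obtain z1 where "z1 \<in> V" "E (p (n - 1 - 0)) z1" "\<not> E (p (n - 1 - 1)) z1"
    by (auto simp: numeral_2_eq_2)
  then have z1: "z1 \<in> strict_corners E V" "cnbhd E V z1 \<subseteq> cnbhd E V (p (n - 1))"
    "cnbhd E V z1 - strict_corners E V = {p (n - 1)}"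
    using rev.private_corner_at_start[OF \<open>n \<ge> 2\<close>] by simp_all
  have "\<not> E z0 z1"
  proof
    assume "E z0 z1"
    then have "E (p 0) z1"
      using z0(2) z1(1) strict_corners_subset[of E V] unfolding cnbhd_def by blast
    then have "p 0 \<in> cnbhd E V z1 - strict_corners E V"
      using symmetric core_in_V core_not_corner z1(1) strict_corners_subset[of E V] \<open>n \<ge> 2\<close>
      unfolding cnbhd_def by auto
    then have "p 0 = p (n - 1)"
      using z1(3) by blast
    then show False
      using core_eq_iff[of 0 "n - 1"] \<open>n \<ge> 2\<close> by simp
  qed
  with that z0(1,3) z1(1,3) show ?thesis
    by blast
qed

lemma core_path_extends:
  assumes "n = 1 \<and> \<not> is_clique E V
    \<or> n = 2 \<and> \<not> dominates E (p 0) V \<and> \<not> dominates E (p 1) V \<or> n \<ge> 3"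
  shows "card (strict_corners E V) \<ge> 2"
    and "card (strict_corners E V) = 2 \<Longrightarrow> \<exists>q. induced_path E q (n + 2) V"
proof -
  have "n \<ge> 1"
    using assms by auto
  obtain z0 z1 where "z0 \<in> strict_corners E V" "z1 \<in> strict_corners E V" "\<not> E z0 z1"
    "cnbhd E V z0 - strict_corners E V = {p 0}" "cnbhd E V z1 - strict_corners E V = {p (n - 1)}"
    using pendant_corners_at_both_ends[OF assms] .
  note extend = extend_by_pendant_corners[OF \<open>n \<ge> 1\<close> this]
  show "card (strict_corners E V) \<ge> 2"
    by (rule extend(1))
  show "card (strict_corners E V) = 2 \<Longrightarrow> \<exists>q. induced_path E q (n + 2) V"
    by (rule extend(2))
qed

end

lemma induced_path_of_small_clique:
  assumes "graph V E" and "is_clique E V" and "card V = c" and "c \<in> {1, 2}"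
  shows "\<exists>p. induced_path E p c V"
proof (cases "c = 1")
  case True
  then obtain v where V: "V = {v}"
    using assms(3) True by (auto simp: card_1_singleton_iff)
  then have "E v v"
    using assms(1) unfolding graph_def by simp
  then have "induced_path E (\<lambda>_. v) c V"
    unfolding induced_path_def bij_betw_def path_E_def V True by simp
  then show ?thesis by (rule exI[of _ "\<lambda>_. v"])
next
  case False
  then have "c = 2"
    using assms(4) by simp
  then obtain u v where V: "V = {u, v}" "u \<noteq> v"
    using assms(3) card_2_iff by metis
  have "E u v" "E v u" "E u u" "E v v"
    using assms(2) unfolding V is_clique_def by simp_all
  moreover have "{0..<2} = {0, Suc 0 :: nat}"
    by auto
  ultimately have "induced_path E (\<lambda>i. if i = 0 then u else v) c V"
    unfolding induced_path_def bij_betw_def inj_on_def path_E_def V \<open>c = 2\<close>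
    using V(2) by (auto simp: less_2_cases_iff)
  then show ?thesis by (rule exI[of _ "\<lambda>i. if i = 0 then u else v"])
qed

lemma peeled_core_path_extends:
  assumes "graph V E" and "cop_win V E" and "\<not> is_clique E V"
    and "c = 1 \<or> c = 2 \<and> type0 V E" and "corner_rank V E = k + 2"
    and "induced_path E p (2 * k + c) (V - strict_corners E V)"
  shows "card (strict_corners E V) \<ge> 2"
    and "card (strict_corners E V) = 2 \<Longrightarrow> \<exists>q. induced_path E q (2 * k + c + 2) V"
proof -
  interpret corner_peeling V E p "2 * k + c"
    using assms(1,6) by unfold_locales
  have "\<not> dominates E (p i) V" if "k = 0" "c = 2" "i < 2" for i
    using type0_rank2_not_dominating[of V E "p i"] assms(4,5) core_in that by auto
  then have "2 * k + c = 1 \<and> \<not> is_clique E V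
      \<or> 2 * k + c = 2 \<and> \<not> dominates E (p 0) V \<and> \<not> dominates E (p 1) V \<or> 2 * k + c \<ge> 3"
    using assms(3,4) by (cases k) auto
  note extend = core_path_extends[OF this]
  show "card (strict_corners E V) \<ge> 2"
    by (rule extend(1))
  show "card (strict_corners E V) = 2 \<Longrightarrow> \<exists>q. induced_path E q (2 * k + c + 2) V"
    by (rule extend(2))
qed

lemma induced_path_of_rcv:
  assumes "graph V E" and "cop_win V E" and "rcv V E = c # replicate k 2"
    and "c = 1 \<or> c = 2 \<and> type0 V E"
  shows "\<exists>p. induced_path E p (2 * k + c) V"
  using assms
proof (induction k arbitrary: V)
  case 0
  then have "corner_rank V E = 1"
    using length_rcv[of V E] by simp
  then have clique: "is_clique E V"
    using clique_iff_corner_rank_1[OF "0.prems"(2)] by simp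
  then have "card V = c"
    using rcv_clique[OF clique] "0.prems"(3) by simp
  then show ?case
    using induced_path_of_small_clique[OF "0.prems"(1) clique] "0.prems"(4) by auto
next
  case (Suc k)
  define L where "L = V - strict_corners E V"
  have rank: "corner_rank V E = k + 2"
    using length_rcv[of V E] Suc.prems(3) by simp
  then have not_clique: "\<not> is_clique E V"
    using clique_iff_corner_rank_1[OF Suc.prems(2)] by simp
  have "rcv L E @ [card (strict_corners E V)] = (c # replicate k 2) @ [2]"
    using rcv_remove_corners[OF Suc.prems(2) not_clique] Suc.prems(3)
    unfolding L_def by (simp add: replicate_append_same)
  then have rcv_L: "rcv L E = c # replicate k 2" and two: "card (strict_corners E V) = 2"
    by simp_all
  have "\<exists>p. induced_path E p (2 * k + c) L"
    using Suc.IH[of L] graph_remove_corners[OF Suc.prems(1)] rcv_L Suc.prems(4)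
      cop_win_remove_corners(1)[OF Suc.prems(2) not_clique] type0_remove_corners[OF _ not_clique]
    unfolding L_def by blast
  then obtain p where "induced_path E p (2 * k + c) (V - strict_corners E V)"
    unfolding L_def by blast
  then show ?case
    using peeled_core_path_extends(2)[OF Suc.prems(1,2) not_clique Suc.prems(4) rank _ two] by simp
qed

lemma rcv_not_ending_in_one:
  assumes "graph V E" and "cop_win V E" and "rcv V E = c # replicate k 2 @ [1]"
    and "c = 1 \<or> c = 2 \<and> type0 V E"
  shows False
proof -
  define L where "L = V - strict_corners E V"
  have rank: "corner_rank V E = k + 2"
    using length_rcv[of V E] assms(3) by simp
  then have not_clique: "\<not> is_clique E V"
    using clique_iff_corner_rank_1[OF assms(2)] by simp
  have "rcv L E @ [card (strict_corners E V)] = (c # replicate k 2) @ [1]"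
    using rcv_remove_corners[OF assms(2) not_clique] assms(3) unfolding L_def by simp
  then have rcv_L: "rcv L E = c # replicate k 2" and one: "card (strict_corners E V) = 1"
    by simp_all
  have "\<exists>p. induced_path E p (2 * k + c) L"
    using induced_path_of_rcv[of L E c k] graph_remove_corners[OF assms(1)] rcv_L assms(4)
      cop_win_remove_corners(1)[OF assms(2) not_clique] type0_remove_corners[OF _ not_clique]
    unfolding L_def by blast
  then obtain p where "induced_path E p (2 * k + c) (V - strict_corners E V)"
    unfolding L_def by blast
  with peeled_core_path_extends(1)[OF assms(1,2) not_clique assms(4) rank] one show False
    by simp
qed

section \<open>The corner ranking of a path\<close>

lemma graph_path: "n \<ge> 1 \<Longrightarrow> graph (path_V n) path_E"
  unfolding graph_def path_V_def path_E_def by auto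

lemma is_clique_path_interval_iff: "is_clique path_E {a..<b} \<longleftrightarrow> b \<le> a + 2"
proof
  assume clique: "is_clique path_E {a..<b}"
  show "b \<le> a + 2"
  proof (rule ccontr)
    assume "\<not> b \<le> a + 2"
    then have "a \<in> {a..<b}" "a + 2 \<in> {a..<b}" by auto
    with clique show False
      unfolding is_clique_def path_E_def by fastforce
  qed
qed (auto simp: is_clique_def path_E_def)

lemma strict_corners_path_interval:
  assumes "b \<ge> a + 3"
  shows "strict_corners path_E {a..<b} = {a, b - 1}"
proof (intro equalityI subsetI)
  fix v assume "v \<in> strict_corners path_E {a..<b}"
  then obtain w where v: "v \<in> {a..<b}" and "w \<noteq> v"
    and below: "cnbhd path_E {a..<b} v \<subseteq> cnbhd path_E {a..<b} w"
    unfolding strict_corners_def by blast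
  show "v \<in> {a, b - 1}"
  proof (rule ccontr)
    assume "v \<notin> {a, b - 1}"
    then have "v - 1 \<in> cnbhd path_E {a..<b} v" "v + 1 \<in> cnbhd path_E {a..<b} v"
      using v unfolding cnbhd_def path_E_def by auto
    then have "path_E w (v - 1)" "path_E w (v + 1)"
      using below unfolding cnbhd_def by auto
    then show False
      using \<open>w \<noteq> v\<close> \<open>v \<notin> {a, b - 1}\<close> v unfolding path_E_def by auto
  qed
next
  have "a + 2 \<in> cnbhd path_E {a..<b} (a + 1) - cnbhd path_E {a..<b} a"
    using assms unfolding cnbhd_def path_E_def by auto
  moreover have "cnbhd path_E {a..<b} a \<subseteq> cnbhd path_E {a..<b} (a + 1)"
    unfolding cnbhd_def path_E_def by auto
  ultimately have "cnbhd path_E {a..<b} a \<subset> cnbhd path_E {a..<b} (a + 1)"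
    by blast
  then have "a \<in> strict_corners path_E {a..<b}"
    unfolding strict_corners_def using assms by (intro CollectI conjI bexI[of _ "a + 1"]) auto
  have "b - 3 \<in> cnbhd path_E {a..<b} (b - 2) - cnbhd path_E {a..<b} (b - 1)"
    using assms unfolding cnbhd_def path_E_def by auto
  moreover have "cnbhd path_E {a..<b} (b - 1) \<subseteq> cnbhd path_E {a..<b} (b - 2)"
    using assms unfolding cnbhd_def path_E_def by auto
  ultimately have "cnbhd path_E {a..<b} (b - 1) \<subset> cnbhd path_E {a..<b} (b - 2)"
    by blast
  then have "b - 1 \<in> strict_corners path_E {a..<b}"
    unfolding strict_corners_def using assms by (intro CollectI conjI bexI[of _ "b - 2"]) auto
  fix v assume "v \<in> {a, b - 1}"
  with \<open>a \<in> strict_corners path_E {a..<b}\<close> show "v \<in> strict_corners path_E {a..<b}"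
    using \<open>b - 1 \<in> strict_corners path_E {a..<b}\<close> by blast
qed

lemma layer_path:
  assumes "c \<ge> 1" and "j \<le> k"
  shows "layer path_E (path_V (2 * k + c)) (Suc j) = {j..<2 * k + c - j}"
  using assms(2)
proof (induction j)
  case 0
  then show ?case by (simp add: path_V_def)
next
  case (Suc j)
  then have "layer path_E (path_V (2 * k + c)) (Suc (Suc j)) = {j..<2 * k + c - j} - {j, 2 * k + c - j - 1}"
    using strict_corners_path_interval[of j "2 * k + c - j"] assms(1) by simp
  also have "\<dots> = {Suc j..<2 * k + c - Suc j}"
    using Suc.prems assms(1) by auto
  finally show ?case .
qed

lemma path_corner_ranks:
  fixes k c :: nat
  assumes "c \<in> {1, 2}"
  defines "P \<equiv> path_V (2 * k + c)"
  shows "cop_win P path_E" and "corner_rank P path_E = Suc k"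
    and "rank_set P path_E (Suc k) = {k..<k + c}"
    and "rcv P path_E = c # replicate k 2"
proof -
  have "c \<ge> 1"
    using assms(1) by auto
  then have layers: "layer path_E P (Suc j) = {j..<2 * k + c - j}" if "j \<le> k" for j
    unfolding P_def using layer_path that by blast
  have top: "layer path_E P (Suc k) = {k..<k + c}"
    using layers[of k] by simp
  have clique: "is_clique path_E (layer path_E P (Suc k))"
    unfolding top is_clique_path_interval_iff using assms(1) by auto
  have not_clique: "\<not> is_clique path_E (layer path_E P j)" if "1 \<le> j" "j < Suc k" for j
    using layers[of "j - 1"] that assms(1) is_clique_path_interval_iff by auto
  show "cop_win P path_E"
    unfolding cop_win_def using clique by (intro exI[of _ "Suc k"]) simp
  show rank: "corner_rank P path_E = Suc k"
    by (rule corner_rank_eqI[OF _ clique not_clique]) simp_all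
  show "rank_set P path_E (Suc k) = {k..<k + c}"
    unfolding rank_set_def using clique not_clique top by auto
  have "card (rank_set P path_E j) = 2" if "j \<in> set (rev [1..<Suc k])" for j
  proof -
    have j: "1 \<le> j" "j < Suc k" using that by auto
    have "rank_set P path_E j = strict_corners path_E (layer path_E P j)"
      unfolding rank_set_def using j not_clique by auto
    also have "\<dots> = strict_corners path_E {j - 1..<2 * k + c - (j - 1)}"
      using layers[of "j - 1"] j by simp
    also have "\<dots> = {j - 1, 2 * k + c - j}"
      using strict_corners_path_interval j assms(1) by auto
    finally show ?thesis
      using j assms(1) by auto
  qed
  then have "map (\<lambda>j. card (rank_set P path_E j)) (rev [1..<Suc k]) = map (\<lambda>_. 2) (rev [1..<Suc k])"
    by (rule map_cong[OF refl])
  also have "\<dots> = replicate k 2"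
    unfolding map_replicate_const by simp
  finally have lower: "map (\<lambda>j. card (rank_set P path_E j)) (rev [1..<Suc k]) = replicate k 2" .
  have "card (rank_set P path_E (Suc k)) = c"
    unfolding rank_set_def using clique not_clique top by auto
  moreover have "rev [1..<Suc k + 1] = Suc k # rev [1..<Suc k]"
    by simp
  ultimately show "rcv P path_E = c # replicate k 2"
    unfolding rcv_def rank using lower by simp
qed

lemma type0_even_path: "type0 (path_V (2 * k + 2)) path_E"
proof -
  define P where "P = path_V (2 * k + 2)"
  have cop_win: "cop_win P path_E" and rank: "corner_rank P path_E = Suc k"
    and top: "rank_set P path_E (Suc k) = {k, Suc k}"
    using path_corner_ranks[of 2 k] unfolding P_def by (simp_all add: atLeastLessThanSuc insert_commute)
  have "\<not> type1 P path_E"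
  proof (cases "k = 0")
    case True
    then show ?thesis
      using rank unfolding type1_def by simp
  next
    case False
    have "layer path_E P (Suc (k - 1)) = {k - 1..<k + 3}"
      using layer_path[of 2 "k - 1" k] False unfolding P_def by simp
    then have below: "layer path_E P k = {k - 1..<k + 3}"
      using False by simp
    have "\<not> dominates path_E k (layer path_E P k)"
      unfolding below dominates_def path_E_def by (auto intro!: bexI[of _ "k + 2"])
    moreover have "\<not> dominates path_E (Suc k) (layer path_E P k)"
      unfolding below dominates_def path_E_def using False by (auto intro!: bexI[of _ "k - 1"])
    ultimately show ?thesis
      unfolding type1_def rank top by auto
  qed
  then show ?thesis
    unfolding type0_def P_def[symmetric] using cop_win by simp
qed

theorem theorem3p22:
  fixes \<alpha> :: nat
  assumes "\<alpha> \<ge> 1"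
  shows
    "((graph (path_V (2*\<alpha>-1)) path_E \<and> cop_win (path_V (2*\<alpha>-1)) path_E \<and>
        rcv (path_V (2*\<alpha>-1)) path_E = 1 # replicate (\<alpha>-1) 2) \<and>
     (\<forall>(V::'a set) E. graph V E \<and> cop_win V E \<and> rcv V E = 1 # replicate (\<alpha>-1) 2 \<longrightarrow>
        graph_iso V E (path_V (2*\<alpha>-1)) path_E)) \<and>
     (\<forall>m\<ge>1. \<not> realizable ([1] @ replicate m 2 @ [1])) \<and>
     ((graph (path_V (2*\<alpha>)) path_E \<and> type0 (path_V (2*\<alpha>)) path_E \<and>
        rcv (path_V (2*\<alpha>)) path_E = replicate \<alpha> 2) \<and>
     (\<forall>(V::'b set) E. graph V E \<and> type0 V E \<and> rcv V E = replicate \<alpha> 2 \<longrightarrow>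
        graph_iso V E (path_V (2*\<alpha>)) path_E)) \<and>
     (\<forall>m\<ge>1. \<not> zero_realizable (replicate m 2 @ [1]))"
proof -
  have odd: "2 * \<alpha> - 1 = 2 * (\<alpha> - 1) + 1" and even: "2 * \<alpha> = 2 * (\<alpha> - 1) + 2"
    and vector: "replicate \<alpha> 2 = 2 # replicate (\<alpha> - 1) 2"
    using assms by (auto simp: replicate_Suc[symmetric])
  have unique_odd: "\<forall>(V::'a set) E. graph V E \<and> cop_win V E \<and> rcv V E = 1 # replicate (\<alpha>-1) 2 \<longrightarrow>
        graph_iso V E (path_V (2*\<alpha>-1)) path_E"
    unfolding odd using induced_path_of_rcv[of _ _ 1] induced_path_graph_iso by metis
  have unique_even: "\<forall>(V::'b set) E. graph V E \<and> type0 V E \<and> rcv V E = replicate \<alpha> 2 \<longrightarrow>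
        graph_iso V E (path_V (2*\<alpha>)) path_E"
    unfolding even vector using induced_path_of_rcv[of _ _ 2] induced_path_graph_iso type0_def
    by metis
  have not_realizable: "\<not> realizable ([1] @ replicate m 2 @ [1])" for m
    unfolding realizable_def using rcv_not_ending_in_one[of _ _ 1 m] by auto
  have not_0_realizable: "\<not> zero_realizable (replicate m 2 @ [1])" if "m \<ge> 1" for m
    using that rcv_not_ending_in_one[of _ _ 2 "m - 1"] unfolding zero_realizable_def type0_def
    by (cases m) auto
  show ?thesis
    unfolding odd even vector
    using graph_path path_corner_ranks[of 1 "\<alpha> - 1"] path_corner_ranks[of 2 "\<alpha> - 1"]
      type0_even_path[of "\<alpha> - 1"] unique_odd unique_even not_realizable not_0_realizable
    by (simp add: odd even vector)
qed

end
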